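(* Let $A\in\mathbb{R}^{2\times2}$ be symmetric positive definite and $E=\{x\in\mathbb{R}^2:x^{\top}A^{-1}x=1\}$. For every $x_0\in E$ there exists a parallelogram $P$ inscribed in $E$ having $x_0$ as a vertex with \[ S(P)=4\sqrt{\det A}\,\sqrt{\operatorname{tr}(A^{-1})}=4\sqrt{\operatorname{tr}(A)}. \]
   Context: A centred parallelogram with linearly independent edge vectors $v_1,v_2$ is $P=\{t_1v_1+t_2v_2:|t_i|\le\tfrac12\}$ with vertices $\tfrac12(\pm v_1\pm v_2)$; it is inscribed in $E$ if all four vertices lie on $E$. Here $S(P)$ (the total measure of the facets, i.e. the edges) is the perimeter $2(\|v_1\|+\|v_2\|)$. *)

theory Defs
  imports "HOL-Analysis.Analysis"
begin

definition sym_pos_def_matrix :: "real^2^2 \<Rightarrow> bool" where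
  "sym_pos_def_matrix A \<longleftrightarrow> transpose A = A \<and> (\<forall>x. x \<noteq> 0 \<longrightarrow> x \<bullet> (A *v x) > 0)"

definition ellipse_of :: "real^2^2 \<Rightarrow> (real^2) set" where
  "ellipse_of A = {x. x \<bullet> (matrix_inv A *v x) = 1}"

definition pair_lin_indep :: "real^2 \<Rightarrow> real^2 \<Rightarrow> bool" where
  "pair_lin_indep v1 v2 \<longleftrightarrow> (\<forall>a b. a *\<^sub>R v1 + b *\<^sub>R v2 = 0 \<longrightarrow> a = 0 \<and> b = 0)"

text \<open>Vertices (1/2)(+-v1 +- v2) of the centred parallelogram with edge vectors v1, v2.\<close>
definition par_vertices :: "real^2 \<Rightarrow> real^2 \<Rightarrow> (real^2) set" where
  "par_vertices v1 v2 = {(1/2) *\<^sub>R (s *\<^sub>R v1 + t *\<^sub>R v2) | s t. s \<in> {-1, 1} \<and> t \<in> {-1, 1}}"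

definition inscribed_in :: "real^2 \<Rightarrow> real^2 \<Rightarrow> (real^2) set \<Rightarrow> bool" where
  "inscribed_in v1 v2 E \<longleftrightarrow> pair_lin_indep v1 v2 \<and> par_vertices v1 v2 \<subseteq> E"

definition par_perimeter :: "real^2 \<Rightarrow> real^2 \<Rightarrow> real" where
  "par_perimeter v1 v2 = 2 * (norm v1 + norm v2)"

end

theory Submission
  imports Defs
begin

(* Let p = x0, t = tr A, and let q be the point of E in the direction A^2 J p, where J is the
   quarter turn; the parallelogram has vertices +-p, +-q, i.e. edge vectors p + q and p - q.
   With T = |p|^2 + |q|^2 and P = p . q, polynomial identities valid on E give P^2 = t T - t^2
   and T <= 2 t. Hence |p + q| |p - q| = sqrt (T^2 - 4 P^2) = 2 t - T, so that
   (|p + q| + |p - q|)^2 = 2 T + 2 (2 t - T) = 4 t. Finally det A tr (A^-1) = tr A in dimension 2. *)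

definition sym_matrix2 :: "real \<Rightarrow> real \<Rightarrow> real \<Rightarrow> real^2^2" where
  "sym_matrix2 a b c = vector [vector [a, b], vector [b, c]]"

definition quad_form2 :: "real \<Rightarrow> real \<Rightarrow> real \<Rightarrow> real^2 \<Rightarrow> real" where
  "quad_form2 a b c x = a * (x$1)\<^sup>2 + 2 * b * x$1 * x$2 + c * (x$2)\<^sup>2"

lemma matrix_inv_eqI:
  fixes A :: "'a::semiring_1^'n^'m" and M :: "'a^'m^'n"
  assumes "A ** M = mat 1" and "M ** A = mat 1"
  shows "matrix_inv A = M"
proof -
  let ?B = "matrix_inv A"
  have "\<exists>M'. A ** M' = mat 1 \<and> M' ** A = mat 1"
    using assms by blast
  then have B: "A ** ?B = mat 1 \<and> ?B ** A = mat 1"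
    unfolding matrix_inv_def by (rule someI_ex)
  have "?B = ?B ** (A ** M)"
    using assms(1) by simp
  also have "\<dots> = (?B ** A) ** M"
    by (rule matrix_mul_assoc)
  also have "\<dots> = M"
    using B by simp
  finally show ?thesis .
qed

lemma det_sym_matrix2: "det (sym_matrix2 a b c) = a * c - b\<^sup>2"
  by (simp add: det_2 sym_matrix2_def power2_eq_square)

lemma trace_sym_matrix2: "trace (sym_matrix2 a b c) = a + c"
  by (simp add: trace_def sum_2 sym_matrix2_def)

lemma matrix_inv_sym_matrix2:
  assumes "a * c - b\<^sup>2 \<noteq> 0"
  shows "matrix_inv (sym_matrix2 a b c) = (1 / (a * c - b\<^sup>2)) *\<^sub>R sym_matrix2 c (- b) a"
proof (rule matrix_inv_eqI)
  have "sym_matrix2 a b c ** sym_matrix2 c (- b) a = (a * c - b\<^sup>2) *\<^sub>R mat 1"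
    and "sym_matrix2 c (- b) a ** sym_matrix2 a b c = (a * c - b\<^sup>2) *\<^sub>R mat 1"
    by (simp_all add: vec_eq_iff forall_2 matrix_matrix_mult_def sum_2 mat_def sym_matrix2_def
        power2_eq_square)
  then show "sym_matrix2 a b c ** ((1 / (a * c - b\<^sup>2)) *\<^sub>R sym_matrix2 c (- b) a) = mat 1"
    and "(1 / (a * c - b\<^sup>2)) *\<^sub>R sym_matrix2 c (- b) a ** sym_matrix2 a b c = mat 1"
    using assms by (simp_all add: matrix_scalar_ac scalar_matrix_assoc[symmetric])
qed

lemma trace_matrix_inv_sym_matrix2:
  assumes "a * c - b\<^sup>2 \<noteq> 0"
  shows "trace (matrix_inv (sym_matrix2 a b c)) = (a + c) / (a * c - b\<^sup>2)"
  unfolding matrix_inv_sym_matrix2[OF assms]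
  by (simp add: trace_def sum_2 sym_matrix2_def add_divide_distrib)

lemma inner_sym_matrix2_mult: "x \<bullet> (sym_matrix2 a b c *v x) = quad_form2 a b c x"
  by (simp add: inner_vec_def sum_2 matrix_vector_mult_def sym_matrix2_def quad_form2_def
      algebra_simps power2_eq_square)

lemma quad_form2_scaleR: "quad_form2 a b c (s *\<^sub>R x) = s\<^sup>2 * quad_form2 a b c x"
  by (simp add: quad_form2_def algebra_simps power2_eq_square)

lemma quad_form2_uminus: "quad_form2 a b c (- x) = quad_form2 a b c x"
  by (simp add: quad_form2_def)

lemma quad_form2_pos:
  assumes "a > 0" and "a * c - b\<^sup>2 > 0" and "x \<noteq> 0"
  shows "quad_form2 a b c x > 0"
proof -
  have "a * quad_form2 a b c x = (a * x$1 + b * x$2)\<^sup>2 + (a * c - b\<^sup>2) * (x$2)\<^sup>2"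
    unfolding quad_form2_def by algebra
  moreover have "(a * x$1 + b * x$2)\<^sup>2 + (a * c - b\<^sup>2) * (x$2)\<^sup>2 > 0"
  proof (cases "x$2 = 0")
    case True
    then have "x$1 \<noteq> 0"
      using assms(3) by (auto simp: vec_eq_iff forall_2)
    with True show ?thesis
      using assms(1,2) by simp
  next
    case False
    then show ?thesis
      using assms(2) by (simp add: add_nonneg_pos)
  qed
  ultimately have "a * quad_form2 a b c x > 0"
    by simp
  then show ?thesis
    using assms(1) zero_less_mult_pos by blast
qed

lemma ellipse_of_sym_matrix2:
  assumes "a * c - b\<^sup>2 > 0"
  shows "ellipse_of (sym_matrix2 a b c) = {x. quad_form2 c (- b) a x = a * c - b\<^sup>2}"
  using assms
  by (auto simp: ellipse_of_def matrix_inv_sym_matrix2 scaleR_matrix_vector_assoc[symmetric]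
      inner_sym_matrix2_mult)

lemma sym_pos_def_matrix2E:
  assumes "sym_pos_def_matrix A"
  obtains a b c where "A = sym_matrix2 a b c" and "a > 0" and "a * c - b\<^sup>2 > 0"
proof -
  define a b c where "a = A$1$1" and "b = A$1$2" and "c = A$2$2"
  have "A$2$1 = (transpose A)$1$2"
    by (simp add: transpose_def)
  then have A: "A = sym_matrix2 a b c"
    using assms by (simp add: sym_pos_def_matrix_def vec_eq_iff forall_2 sym_matrix2_def a_def b_def c_def)
  have pos: "quad_form2 a b c x > 0" if "x \<noteq> 0" for x
    using assms that unfolding A sym_pos_def_matrix_def inner_sym_matrix2_mult by blast
  have "a > 0"
    using pos[of "vector [1, 0]"] by (simp add: quad_form2_def vec_eq_iff forall_2)
  moreover have "a * (a * c - b\<^sup>2) > 0"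
    using pos[of "vector [b, - a]"] \<open>a > 0\<close>
    by (simp add: quad_form2_def vec_eq_iff forall_2 algebra_simps power2_eq_square)
  ultimately show ?thesis
    using A that by (simp add: zero_less_mult_iff)
qed

lemma par_vertices_add_diff: "par_vertices (p + q) (p - q) = {p, q, - q, - p}"
proof -
  have vertex: "(1/2) *\<^sub>R (s *\<^sub>R (p + q) + t *\<^sub>R (p - q)) = ((s + t) / 2) *\<^sub>R p + ((s - t) / 2) *\<^sub>R q"
    for s t :: real
    by (simp add: vec_eq_iff field_simps)
  have four_signs: "{g s t | s t :: real. s \<in> {-1, 1} \<and> t \<in> {-1, 1}} = {g 1 1, g 1 (-1), g (-1) 1, g (-1) (-1)}"
    for g :: "real \<Rightarrow> real \<Rightarrow> real^2"
    by blast
  show ?thesis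
    unfolding par_vertices_def vertex four_signs by simp
qed

lemma pair_lin_indepI:
  assumes "u$1 * v$2 - u$2 * v$1 \<noteq> 0"
  shows "pair_lin_indep u v"
  unfolding pair_lin_indep_def
proof (intro allI impI)
  fix \<alpha> \<beta> :: real
  assume "\<alpha> *\<^sub>R u + \<beta> *\<^sub>R v = 0"
  then have 1: "\<alpha> * u$1 + \<beta> * v$1 = 0" and 2: "\<alpha> * u$2 + \<beta> * v$2 = 0"
    by (auto simp: vec_eq_iff forall_2)
  have "\<alpha> * (u$1 * v$2 - u$2 * v$1) = 0" and "\<beta> * (u$1 * v$2 - u$2 * v$1) = 0"
    using 1 2 by algebra+
  then show "\<alpha> = 0 \<and> \<beta> = 0"
    using assms by simp
qed

lemma norm_add_plus_norm_diff_eq: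
  fixes p q :: "'a::real_inner"
  assumes "(p \<bullet> q)\<^sup>2 = t * ((norm p)\<^sup>2 + (norm q)\<^sup>2) - t\<^sup>2"
    and "(norm p)\<^sup>2 + (norm q)\<^sup>2 \<le> 2 * t"
  shows "norm (p + q) + norm (p - q) = 2 * sqrt t"
proof -
  define T where "T = (norm p)\<^sup>2 + (norm q)\<^sup>2"
  have plus: "(norm (p + q))\<^sup>2 = T + 2 * (p \<bullet> q)"
    and minus: "(norm (p - q))\<^sup>2 = T - 2 * (p \<bullet> q)"
    unfolding T_def power2_norm_eq_inner by (simp_all add: algebra_simps inner_commute)
  have "(norm (p + q) * norm (p - q))\<^sup>2 = (2 * t - T)\<^sup>2"
    unfolding power_mult_distrib plus minus using assms(1) by (simp add: T_def algebra_simps power2_eq_square)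
  then have prod: "norm (p + q) * norm (p - q) = 2 * t - T"
    using assms(2) by (simp add: T_def power2_eq_iff_nonneg)
  have "(norm (p + q) + norm (p - q))\<^sup>2 = 4 * t"
    unfolding power2_sum plus minus mult.assoc prod by simp
  then have "norm (p + q) + norm (p - q) = sqrt (4 * t)"
    by (simp add: real_sqrt_unique)
  also have "\<dots> = 2 * sqrt t"
    by (simp add: real_sqrt_mult)
  finally show ?thesis .
qed

lemma adjacent_vertex_identities:
  fixes a b c :: real and p :: "real^2"
  defines "d \<equiv> a * c - b\<^sup>2" and "t \<equiv> a + c" and "r \<equiv> (norm p)\<^sup>2"
  defines "z \<equiv> sym_matrix2 a b c *v vector [- p$2, p$1]"
  defines "w \<equiv> sym_matrix2 a b c *v z"
  assumes on_E: "quad_form2 c (- b) a p = d"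
  shows "d * (p \<bullet> w)\<^sup>2 = t * (r * quad_form2 c (- b) a w + d * (norm w)\<^sup>2) - t\<^sup>2 * quad_form2 c (- b) a w"
    and "(2 * t - r) * quad_form2 c (- b) a w - d * (norm w)\<^sup>2 = d\<^sup>2 * t * (t - r)\<^sup>2"
    and "p$1 * w$2 - p$2 * w$1 = (norm z)\<^sup>2"
proof -
  have z: "z$1 = b * p$1 - a * p$2" "z$2 = c * p$1 - b * p$2"
    unfolding z_def sym_matrix2_def by (simp_all add: matrix_vector_mult_def sum_2)
  have w: "w$1 = a * z$1 + b * z$2" "w$2 = b * z$1 + c * z$2"
    unfolding w_def sym_matrix2_def by (simp_all add: matrix_vector_mult_def sum_2)
  have coords: "(norm x)\<^sup>2 = (x$1)\<^sup>2 + (x$2)\<^sup>2" "p \<bullet> x = p$1 * x$1 + p$2 * x$2" for x :: "real^2"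
    by (simp_all add: norm_vec_def L2_set_def sum_2 inner_vec_def)
  show "d * (p \<bullet> w)\<^sup>2 = t * (r * quad_form2 c (- b) a w + d * (norm w)\<^sup>2) - t\<^sup>2 * quad_form2 c (- b) a w"
    and "(2 * t - r) * quad_form2 c (- b) a w - d * (norm w)\<^sup>2 = d\<^sup>2 * t * (t - r)\<^sup>2"
    using on_E unfolding coords r_def w z quad_form2_def d_def t_def by algebra+
  show "p$1 * w$2 - p$2 * w$1 = (norm z)\<^sup>2"
    unfolding coords w z by algebra
qed

lemma adjacent_vertexE:
  fixes a b c :: real and p :: "real^2"
  assumes "a > 0" and "a * c - b\<^sup>2 > 0" and on_E: "quad_form2 c (- b) a p = a * c - b\<^sup>2"
  obtains q where "quad_form2 c (- b) a q = a * c - b\<^sup>2"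
    and "p$1 * q$2 - p$2 * q$1 \<noteq> 0"
    and "norm (p + q) + norm (p - q) = 2 * sqrt (a + c)"
proof -
  define d t r where "d = a * c - b\<^sup>2" and "t = a + c" and "r = (norm p)\<^sup>2"
  define z where "z = sym_matrix2 a b c *v vector [- p$2, p$1]"
  define w where "w = sym_matrix2 a b c *v z"
  define Q where "Q = quad_form2 c (- b) a w"
  \<comment> \<open>Q / d is w \<bullet> (A\<inverse> w), so q is w rescaled onto E.\<close>
  define q where "q = (1 / sqrt (Q / d)) *\<^sub>R w"
  note identities = adjacent_vertex_identities[OF on_E,
      folded d_def t_def r_def z_def, folded w_def Q_def]
  have "d > 0"
    using assms(2) by (simp add: d_def)
  have "a * c > 0"
    using assms(2) zero_le_power2[of b] by linarith
  then have "c > 0"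
    using assms(1) by (simp add: zero_less_mult_iff)
  then have "t > 0"
    using assms(1) by (simp add: t_def)
  have "p \<noteq> 0"
    using on_E \<open>d > 0\<close> by (auto simp: d_def quad_form2_def)
  then have "vector [- p$2, p$1] \<noteq> (0 :: real^2)"
    by (auto simp: vec_eq_iff forall_2)
  moreover have "inj ((*v) (sym_matrix2 a b c))"
    using \<open>d > 0\<close> by (intro inj_matrix_vector_mult) (simp add: invertible_det_nz det_sym_matrix2 d_def)
  ultimately have "z \<noteq> 0"
    unfolding z_def by (metis injD matrix_vector_mult_0_right)
  then have cross_pos: "p$1 * w$2 - p$2 * w$1 > 0"
    using identities(3) by simp
  then have "w \<noteq> 0"
    by auto
  then have "Q > 0"
    unfolding Q_def using \<open>c > 0\<close> assms(2) by (intro quad_form2_pos) (auto simp: algebra_simps)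
  show ?thesis
  proof
    show "quad_form2 c (- b) a q = a * c - b\<^sup>2"
      using \<open>Q > 0\<close> \<open>d > 0\<close> by (simp add: q_def quad_form2_scaleR power_divide Q_def[symmetric] d_def)
    have "p$1 * q$2 - p$2 * q$1 = (p$1 * w$2 - p$2 * w$1) / sqrt (Q / d)"
      by (simp add: q_def diff_divide_distrib)
    then show "p$1 * q$2 - p$2 * q$1 \<noteq> 0"
      using cross_pos \<open>Q > 0\<close> \<open>d > 0\<close> by simp
    have inner_q: "(p \<bullet> q)\<^sup>2 = d * (p \<bullet> w)\<^sup>2 / Q" and norm_q: "(norm q)\<^sup>2 = d * (norm w)\<^sup>2 / Q"
      using \<open>Q > 0\<close> \<open>d > 0\<close> by (simp_all add: q_def power_mult_distrib power_divide)
    have "(p \<bullet> q)\<^sup>2 = t * ((norm p)\<^sup>2 + (norm q)\<^sup>2) - t\<^sup>2"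
      unfolding inner_q norm_q identities(1) using \<open>Q > 0\<close> by (simp add: r_def field_simps power2_eq_square)
    moreover have "(norm p)\<^sup>2 + (norm q)\<^sup>2 \<le> 2 * t"
    proof -
      have "d * (norm w)\<^sup>2 \<le> (2 * t - r) * Q"
        using identities(2) \<open>t > 0\<close> by (simp add: algebra_simps)
      then show ?thesis
        unfolding norm_q r_def[symmetric] using \<open>Q > 0\<close> by (simp add: field_simps)
    qed
    ultimately show "norm (p + q) + norm (p - q) = 2 * sqrt (a + c)"
      unfolding t_def[symmetric] by (rule norm_add_plus_norm_diff_eq)
  qed
qed

theorem corollary4p8:
  fixes A :: "real^2^2" and x0 :: "real^2"
  assumes "sym_pos_def_matrix A"
    and "x0 \<in> ellipse_of A"
  shows "\<exists>v1 v2. inscribed_in v1 v2 (ellipse_of A) \<and> x0 \<in> par_vertices v1 v2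
           \<and> par_perimeter v1 v2 = 4 * sqrt (det A) * sqrt (trace (matrix_inv A))
           \<and> par_perimeter v1 v2 = 4 * sqrt (trace A)"
proof -
  obtain a b c where A: "A = sym_matrix2 a b c" and "a > 0" and d: "a * c - b\<^sup>2 > 0"
    using assms(1) by (rule sym_pos_def_matrix2E)
  note E = ellipse_of_sym_matrix2[OF d, folded A]
  have "quad_form2 c (- b) a x0 = a * c - b\<^sup>2"
    using assms(2) unfolding E by simp
  then obtain q where q: "quad_form2 c (- b) a q = a * c - b\<^sup>2"
    and cross: "x0$1 * q$2 - x0$2 * q$1 \<noteq> 0"
    and norms: "norm (x0 + q) + norm (x0 - q) = 2 * sqrt (a + c)"
    by (rule adjacent_vertexE[OF \<open>a > 0\<close> d])
  have "inscribed_in (x0 + q) (x0 - q) (ellipse_of A)"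
    unfolding inscribed_in_def par_vertices_add_diff
  proof
    show "pair_lin_indep (x0 + q) (x0 - q)"
      using cross by (intro pair_lin_indepI) (simp add: algebra_simps)
    show "{x0, q, - q, - x0} \<subseteq> ellipse_of A"
      using assms(2) q unfolding E by (simp add: quad_form2_uminus)
  qed
  moreover have "x0 \<in> par_vertices (x0 + q) (x0 - q)"
    by (simp add: par_vertices_add_diff)
  moreover have "par_perimeter (x0 + q) (x0 - q) = 4 * sqrt (trace A)"
    unfolding par_perimeter_def norms A trace_sym_matrix2 by simp
  moreover have "sqrt (det A) * sqrt (trace (matrix_inv A)) = sqrt (trace A)"
    using d unfolding A det_sym_matrix2 trace_matrix_inv_sym_matrix2[OF less_imp_neq[OF d, symmetric]]
      trace_sym_matrix2 by (simp add: real_sqrt_mult[symmetric])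
  ultimately show ?thesis
    by (metis mult.assoc)
qed

end
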